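(* Let a nondegenerate triangle with circumcenter $O$ and circumradius $R$ be circumscribed about a central conic with foci $F_+,F_-$, and let $d_\pm=|OF_\pm|$. If $R^2=d_+d_-$, then the conic is a hyperbola.
   Context: A central conic is a non-degenerate ellipse or hyperbola. A triangle is circumscribed about a conic if each of its three sidelines is tangent to the conic. *)

theory Defs
  imports "HOL-Analysis.Analysis"
begin

datatype conic_kind = Ellipse | Hyperbola

definition conic_set :: "conic_kind \<Rightarrow> real^2 \<Rightarrow> real^2 \<Rightarrow> real \<Rightarrow> (real^2) set" where
  "conic_set k F1 F2 a =
     (case k of
        Ellipse \<Rightarrow> {P. dist P F1 + dist P F2 = 2 * a}
      | Hyperbola \<Rightarrow> {P. \<bar>dist P F1 - dist P F2\<bar> = 2 * a})"

text \<open>Non-degeneracy: ellipse needs 2a > |F1F2| (circle allowed when F1 = F2);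
  hyperbola needs 0 < 2a < |F1F2|.\<close>
definition valid_conic :: "conic_kind \<Rightarrow> real^2 \<Rightarrow> real^2 \<Rightarrow> real \<Rightarrow> bool" where
  "valid_conic k F1 F2 a =
     (case k of
        Ellipse \<Rightarrow> dist F1 F2 < 2 * a
      | Hyperbola \<Rightarrow> 0 < a \<and> 2 * a < dist F1 F2)"

text \<open>Gradient of the focal defining function |PF1| + |PF2| (ellipse) resp.
  |PF1| - |PF2| (hyperbola) at P (a normal vector of the conic at P).\<close>
definition conic_normal :: "conic_kind \<Rightarrow> real^2 \<Rightarrow> real^2 \<Rightarrow> real^2 \<Rightarrow> real^2" where
  "conic_normal k F1 F2 P =
     (case k of
        Ellipse \<Rightarrow> sgn (P - F1) + sgn (P - F2)
      | Hyperbola \<Rightarrow> sgn (P - F1) - sgn (P - F2))"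

definition line_through :: "real^2 \<Rightarrow> real^2 \<Rightarrow> (real^2) set" where
  "line_through X Y = {X + t *\<^sub>R (Y - X) | t. True}"

definition tangent_line :: "conic_kind \<Rightarrow> real^2 \<Rightarrow> real^2 \<Rightarrow> real \<Rightarrow> real^2 \<Rightarrow> real^2 \<Rightarrow> bool" where
  "tangent_line k F1 F2 a X Y =
     (\<exists>P. P \<in> conic_set k F1 F2 a \<and> P \<in> line_through X Y \<and>
          (Y - X) \<bullet> conic_normal k F1 F2 P = 0)"

end

theory Submission
  imports Defs
begin

text \<open>If an ellipse with foci \<open>F\<^sub>\<plusminus>\<close> and semi-axes \<open>a, b\<close> is inscribed in a triangle
  with circumcircle \<open>(O, R)\<close>, then \<open>4 b\<^sup>2 R\<^sup>2 = (R\<^sup>2 - d\<^sub>+\<^sup>2) (R\<^sup>2 - d\<^sub>-\<^sup>2)\<close>.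
  Scaling the circumcircle to the unit circle of \<open>\<complex>\<close>, the focal property of a tangent
  (the product of the distances from the foci to it is \<open>b\<^sup>2\<close>) becomes one polynomial
  equation per side; these force the three vertices to be roots of a common cubic, and
  Vieta's formulas eliminate them. If \<open>R\<^sup>2 = d\<^sub>+ d\<^sub>-\<close>, the right-hand side is
  \<open>-R\<^sup>2 (d\<^sub>+ - d\<^sub>-)\<^sup>2 \<le> 0\<close>, while the left-hand side is positive.\<close>

definition cross2 :: "real^2 \<Rightarrow> real^2 \<Rightarrow> real" where
  "cross2 u v = u$1 * v$2 - u$2 * v$1"

lemma inner_vec2: "(u::real^2) \<bullet> v = u$1 * v$1 + u$2 * v$2"
  by (simp add: inner_vec_def sum_2)

lemma norm_power2_vec2: "(norm (u::real^2))\<^sup>2 = (u$1)\<^sup>2 + (u$2)\<^sup>2"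
  by (simp add: norm_vec_def L2_set_def sum_2)

lemma binet_cauchy_vec2:
  "(e \<bullet> u) * (e \<bullet> v) + cross2 e u * cross2 e v = (norm e)\<^sup>2 * (u \<bullet> v)"
  unfolding cross2_def inner_vec2 norm_power2_vec2 by algebra

lemma inner_power2_add_cross2_power2: "(e \<bullet> u)\<^sup>2 + (cross2 e u)\<^sup>2 = (norm e)\<^sup>2 * (norm u)\<^sup>2"
  using binet_cauchy_vec2[of e u u] unfolding dot_square_norm by (simp add: power2_eq_square)

lemma inner_cross2_eq_0_imp_eq_0:
  assumes "e \<noteq> 0" "e \<bullet> w = 0" "cross2 e w = 0"
  shows "w = 0"
  using inner_power2_add_cross2_power2[of e w] assms by simp

lemma cross2_mult_cross2_bisected:
  fixes e u v :: "real^2"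
  assumes u: "u \<noteq> 0" and v: "v \<noteq> 0"
    and bisect: "e \<bullet> (sgn u + sgn v) = 0"
    and not_opposite: "dist u v < norm u + norm v"
  shows "cross2 e u * cross2 e v = (norm e)\<^sup>2 * ((norm u + norm v)\<^sup>2 - (dist u v)\<^sup>2) / 4"
proof (cases "e = 0")
  case True
  thus ?thesis by (simp add: cross2_def)
next
  case e: False
  define r1 r2 where "r1 = norm u" and "r2 = norm v"
  have r1: "r1 > 0" and r2: "r2 > 0" using u v by (simp_all add: r1_def r2_def)
  have orth: "(e \<bullet> u) * r2 = - ((e \<bullet> v) * r1)"
  proof -
    have "(e \<bullet> u) / r1 + (e \<bullet> v) / r2 = 0"
      using bisect by (simp add: sgn_div_norm inner_add_right r1_def r2_def divide_inverse mult.commute)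
    thus ?thesis using r1 r2 by (simp add: field_simps)
  qed
  note lag_u = inner_power2_add_cross2_power2[of e u, folded r1_def]
  note lag_v = inner_power2_add_cross2_power2[of e v, folded r2_def]
  have "(cross2 e u * r2)\<^sup>2 = (cross2 e v * r1)\<^sup>2"
  proof -
    have "((e \<bullet> u) * r2)\<^sup>2 = ((e \<bullet> v) * r1)\<^sup>2" using orth by simp
    thus ?thesis using lag_u lag_v by algebra
  qed
  hence "cross2 e u * r2 = cross2 e v * r1 \<or> cross2 e u * r2 = - (cross2 e v * r1)"
    using power2_eq_iff by blast
  moreover have "cross2 e u * r2 \<noteq> - (cross2 e v * r1)"
  proof
    assume opp: "cross2 e u * r2 = - (cross2 e v * r1)"
    have "r2 *\<^sub>R u + r1 *\<^sub>R v = 0"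
      by (rule inner_cross2_eq_0_imp_eq_0[OF e])
        (use orth opp in \<open>simp_all add: inner_add_right cross2_def algebra_simps\<close>)
    hence "r2 *\<^sub>R (u - v) = - ((r1 + r2) *\<^sub>R v)"
      by (simp add: algebra_simps eq_neg_iff_add_eq_0)
    hence "r2 * dist u v = (r1 + r2) * r2"
      using r1 r2 by (metis dist_norm norm_minus_cancel norm_scaleR abs_of_pos add_pos_pos r2_def)
    hence "dist u v = norm u + norm v"
      using r2 by (simp add: r1_def r2_def)
    thus False using not_opposite by simp
  qed
  ultimately have same: "cross2 e u * r2 = cross2 e v * r1" by blast
  have "r1 * (cross2 e u * cross2 e v - (e \<bullet> u) * (e \<bullet> v)) = r1 * ((norm e)\<^sup>2 * r1 * r2)"
    using same orth lag_u by algebra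
  hence "cross2 e u * cross2 e v - (e \<bullet> u) * (e \<bullet> v) = (norm e)\<^sup>2 * r1 * r2"
    using r1 by simp
  moreover have "(dist u v)\<^sup>2 = r1\<^sup>2 + r2\<^sup>2 - 2 * (u \<bullet> v)"
    by (simp add: dist_norm power2_norm_eq_inner inner_diff r1_def r2_def inner_commute)
  ultimately show ?thesis
    using binet_cauchy_vec2[of e u v] unfolding r1_def r2_def by algebra
qed

text \<open>The classical focal property of a tangent: the product of the distances from the
  foci to it is the square of the semi-minor axis.\<close>

lemma ellipse_tangent_focal_cross2:
  assumes ellipse: "dist F1 F2 < 2 * a" and tangent: "tangent_line Ellipse F1 F2 a X Y"
  shows "cross2 (Y - X) (F1 - X) * cross2 (Y - X) (F2 - X)
           = (norm (Y - X))\<^sup>2 * (a\<^sup>2 - (dist F1 F2)\<^sup>2 / 4)"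
proof -
  obtain P t where on_conic: "dist P F1 + dist P F2 = 2 * a"
    and P: "P = X + t *\<^sub>R (Y - X)"
    and normal: "(Y - X) \<bullet> (sgn (P - F1) + sgn (P - F2)) = 0"
    using tangent by (auto simp: tangent_line_def conic_set_def conic_normal_def line_through_def)
  have "P - F1 \<noteq> 0" "P - F2 \<noteq> 0"
    using on_conic ellipse by (auto simp: dist_commute)
  moreover have "dist (P - F1) (P - F2) = dist F1 F2"
    by (simp add: dist_norm norm_minus_commute)
  moreover have "norm (P - F1) + norm (P - F2) = 2 * a"
    using on_conic by (simp add: dist_norm)
  ultimately have "cross2 (Y - X) (P - F1) * cross2 (Y - X) (P - F2)
                     = (norm (Y - X))\<^sup>2 * ((2 * a)\<^sup>2 - (dist F1 F2)\<^sup>2) / 4"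
    using cross2_mult_cross2_bisected[OF _ _ normal] ellipse by simp
  moreover have "cross2 (Y - X) (F - X) = - cross2 (Y - X) (P - F)" for F
    unfolding P cross2_def by (simp add: algebra_simps)
  ultimately show ?thesis by (simp add: power2_eq_square algebra_simps)
qed

definition complex_of_vec2 :: "real^2 \<Rightarrow> complex" where
  "complex_of_vec2 v = Complex (v$1) (v$2)"

lemma complex_of_vec2_diff: "complex_of_vec2 (u - v) = complex_of_vec2 u - complex_of_vec2 v"
  by (simp add: complex_of_vec2_def complex_eq_iff)

lemma cmod_complex_of_vec2: "cmod (complex_of_vec2 v) = norm v"
  by (simp add: complex_of_vec2_def cmod_def norm_vec_def L2_set_def sum_2)

lemma Im_cnj_mult_complex_of_vec2: "Im (cnj (complex_of_vec2 u) * complex_of_vec2 v) = cross2 u v"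
  by (simp add: complex_of_vec2_def cross2_def)

lemma complex_of_vec2_eq_iff: "complex_of_vec2 u = complex_of_vec2 v \<longleftrightarrow> u = v"
  by (simp add: complex_of_vec2_def complex_eq_iff vec_eq_iff forall_2)

text \<open>For \<open>|x| = |y| = 1\<close> the line through \<open>x\<close> and \<open>y\<close> is \<open>{f. f + x y cnj f = x + y}\<close>.\<close>

definition chord_defect :: "complex \<Rightarrow> complex \<Rightarrow> complex \<Rightarrow> complex" where
  "chord_defect x y f = f + x * y * cnj f - x - y"

lemma unit_mult_cnj: "cmod x = 1 \<Longrightarrow> x * cnj x = 1"
  using complex_norm_square[of x] by simp

lemma chord_defect_mult_cnj:
  assumes "cmod x = 1" "cmod y = 1"
  shows "chord_defect x y f * cnj (y - x) = of_real (2 * Im (cnj (y - x) * (f - x))) * \<i>"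
proof -
  have "of_real (2 * Im (cnj (y - x) * (f - x))) * \<i>
          = cnj (y - x) * (f - x) - cnj (cnj (y - x) * (f - x))"
    by (rule complex_diff_cnj[symmetric])
  also have "\<dots> = chord_defect x y f * cnj (y - x)"
    using unit_mult_cnj[OF assms(1)] unit_mult_cnj[OF assms(2)]
    unfolding chord_defect_def complex_cnj_diff complex_cnj_mult complex_cnj_cnj by algebra
  finally show ?thesis by simp
qed

lemma chord_defect_mult_chord_defect:
  fixes \<beta> :: real
  assumes x: "cmod x = 1" and y: "cmod y = 1" and "x \<noteq> y"
    and focal: "Im (cnj (y - x) * (f - x)) * Im (cnj (y - x) * (g - x)) = (cmod (y - x))\<^sup>2 * \<beta>"
  shows "chord_defect x y f * chord_defect x y g = 4 * x * y * \<beta>"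
proof -
  define s t where "s = Im (cnj (y - x) * (f - x))" and "t = Im (cnj (y - x) * (g - x))"
  have "chord_defect x y f * chord_defect x y g * (cnj (y - x))\<^sup>2
          = (chord_defect x y f * cnj (y - x)) * (chord_defect x y g * cnj (y - x))"
    by (simp add: power2_eq_square mult_ac)
  also have "\<dots> = of_real (2 * s) * \<i> * (of_real (2 * t) * \<i>)"
    unfolding s_def t_def by (simp only: chord_defect_mult_cnj[OF x y])
  also have "\<dots> = - 4 * of_real (s * t)"
    by (simp add: algebra_simps)
  also have "\<dots> = - 4 * complex_of_real ((cmod (y - x))\<^sup>2) * complex_of_real \<beta>"
    unfolding s_def t_def focal by simp
  also have "\<dots> = - 4 * ((y - x) * cnj (y - x)) * \<beta>"
    by (simp only: complex_norm_square)
  also have "\<dots> = 4 * x * y * \<beta> * (cnj (y - x))\<^sup>2"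
    using unit_mult_cnj[OF x] unit_mult_cnj[OF y] unfolding complex_cnj_diff by algebra
  finally show ?thesis
    using \<open>x \<noteq> y\<close> by simp
qed

lemma chord_defect_triangle_elim:
  fixes x y z p q \<beta> :: complex
  assumes xy: "x \<noteq> y" and yz: "y \<noteq> z" and zx: "z \<noteq> x"
    and Exy: "chord_defect x y p * chord_defect x y q = 4 * x * y * \<beta>"
    and Eyz: "chord_defect y z p * chord_defect y z q = 4 * y * z * \<beta>"
    and Ezx: "chord_defect z x p * chord_defect z x q = 4 * z * x * \<beta>"
  shows "x + y + z - (p + q) = cnj p * cnj q * (x * y * z)"
    and "4 * \<beta> = 1 + p * cnj q + cnj p * q - (x + y + z) * (cnj p + cnj q)
                  + (x * y + y * z + z * x) * cnj p * cnj q"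
proof -
  define \<sigma> where "\<sigma> = x + y + z"
  define \<kappa> where "\<kappa> = 1 - \<sigma> * (cnj p + cnj q) + p * cnj q + cnj p * q - 4 * \<beta>"
  define \<mu> where "\<mu> = \<sigma> - (p + q)"
  \<comment> \<open>Subtracting two hypotheses leaves \<open>(y - z) G x\<close>: the vertices are roots of the cubic
    \<open>G\<close>, whose lower coefficients are then read off as in Vieta's formulas.\<close>
  define G where "G w = - cnj p * cnj q * w ^ 3 + \<sigma> * cnj p * cnj q * w\<^sup>2 + \<kappa> * w + \<mu>" for w
  have "(y - z) * G x = 0"
  proof -
    have "(y - z) * G x = chord_defect x y p * chord_defect x y q - 4 * x * y * \<beta>
                          - (chord_defect z x p * chord_defect z x q - 4 * z * x * \<beta>)"
      unfolding G_def \<kappa>_def \<mu>_def \<sigma>_def chord_defect_def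
      by (simp add: algebra_simps power2_eq_square power3_eq_cube)
    thus ?thesis using Exy Ezx by simp
  qed
  hence Gx: "G x = 0"
    using yz by simp
  have "(z - x) * G y = 0"
  proof -
    have "(z - x) * G y = chord_defect y z p * chord_defect y z q - 4 * y * z * \<beta>
                          - (chord_defect x y p * chord_defect x y q - 4 * x * y * \<beta>)"
      unfolding G_def \<kappa>_def \<mu>_def \<sigma>_def chord_defect_def
      by (simp add: algebra_simps power2_eq_square power3_eq_cube)
    thus ?thesis using Exy Eyz by simp
  qed
  hence Gy: "G y = 0"
    using zx by simp
  have "(x - y) * (cnj p * cnj q * (x * y + y * z + z * x) + \<kappa>) = G x - G y"
    unfolding G_def \<sigma>_def by (simp add: algebra_simps power2_eq_square power3_eq_cube)
  hence \<kappa>: "\<kappa> = - cnj p * cnj q * (x * y + y * z + z * x)"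
    using Gx Gy xy by (simp add: eq_neg_iff_add_eq_0 add.commute)
  have "G x = \<mu> - cnj p * cnj q * (x * y * z)"
    unfolding G_def \<kappa> \<sigma>_def by (simp add: algebra_simps power2_eq_square power3_eq_cube)
  hence "\<mu> = cnj p * cnj q * (x * y * z)" using Gx by simp
  thus "x + y + z - (p + q) = cnj p * cnj q * (x * y * z)"
    unfolding \<mu>_def \<sigma>_def .
  show "4 * \<beta> = 1 + p * cnj q + cnj p * q - (x + y + z) * (cnj p + cnj q)
                  + (x * y + y * z + z * x) * cnj p * cnj q"
    using \<kappa> unfolding \<kappa>_def \<sigma>_def by (simp add: algebra_simps)
qed

lemma unit_triangle_chord_defect_identity:
  fixes x y z p q :: complex and \<beta> :: real
  assumes x: "cmod x = 1" and y: "cmod y = 1" and z: "cmod z = 1"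
    and "x \<noteq> y" "y \<noteq> z" "z \<noteq> x"
    and "chord_defect x y p * chord_defect x y q = 4 * x * y * \<beta>"
    and "chord_defect y z p * chord_defect y z q = 4 * y * z * \<beta>"
    and "chord_defect z x p * chord_defect z x q = 4 * z * x * \<beta>"
  shows "4 * \<beta> = (1 - (cmod p)\<^sup>2) * (1 - (cmod q)\<^sup>2)"
proof -
  note elim = chord_defect_triangle_elim[OF assms(4-9)]
  have "cnj x + cnj y + cnj z - (cnj p + cnj q) = p * q * (cnj x * cnj y * cnj z)"
    using arg_cong[OF elim(1), of cnj] by simp
  hence "x * y + y * z + z * x - x * y * z * (cnj p + cnj q) = p * q"
    using unit_mult_cnj[OF x] unit_mult_cnj[OF y] unit_mult_cnj[OF z] by algebra
  hence "complex_of_real (4 * \<beta>) = (1 - p * cnj p) * (1 - q * cnj q)"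
    using elim by simp algebra
  also have "\<dots> = complex_of_real ((1 - (cmod p)\<^sup>2) * (1 - (cmod q)\<^sup>2))"
    by (simp flip: complex_norm_square)
  finally show ?thesis
    by (simp only: of_real_eq_iff)
qed

text \<open>For a circle (\<open>F1 = F2\<close> the incenter, \<open>a = r\<close>) this is Euler's \<open>R\<^sup>2 - d\<^sup>2 = 2 R r\<close>.\<close>

lemma inscribed_ellipse_circumcircle_identity:
  fixes A B C Oc F1 F2 :: "real^2" and R a :: real
  assumes "A \<noteq> B" "B \<noteq> C" "C \<noteq> A"
    and OA: "dist Oc A = R" and OB: "dist Oc B = R" and OC: "dist Oc C = R"
    and ellipse: "dist F1 F2 < 2 * a"
    and AB: "tangent_line Ellipse F1 F2 a A B"
    and BC: "tangent_line Ellipse F1 F2 a B C"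
    and CA: "tangent_line Ellipse F1 F2 a C A"
  shows "(4 * a\<^sup>2 - (dist F1 F2)\<^sup>2) * R\<^sup>2 = (R\<^sup>2 - (dist Oc F1)\<^sup>2) * (R\<^sup>2 - (dist Oc F2)\<^sup>2)"
proof -
  have "R \<noteq> 0"
    using OA OB \<open>A \<noteq> B\<close> by auto
  moreover have "R \<ge> 0"
    using OA by auto
  ultimately have R: "R > 0"
    by simp
  define \<zeta> where "\<zeta> W = complex_of_vec2 (W - Oc) / complex_of_real R" for W
  define \<beta> where "\<beta> = (a\<^sup>2 - (dist F1 F2)\<^sup>2 / 4) / R\<^sup>2"
  have cmod_\<zeta>: "cmod (\<zeta> W) = dist Oc W / R" for W
    using R by (simp add: \<zeta>_def norm_divide cmod_complex_of_vec2 dist_norm norm_minus_commute)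
  have \<zeta>_eq_iff: "\<zeta> X = \<zeta> Y \<longleftrightarrow> X = Y" for X Y
    using R by (simp add: \<zeta>_def complex_of_vec2_eq_iff)
  have \<zeta>_diff: "\<zeta> Y - \<zeta> X = complex_of_vec2 (Y - X) / complex_of_real R" for X Y
    by (simp add: \<zeta>_def complex_of_vec2_diff diff_divide_distrib)
  have chord: "chord_defect (\<zeta> X) (\<zeta> Y) (\<zeta> F1) * chord_defect (\<zeta> X) (\<zeta> Y) (\<zeta> F2)
                 = 4 * \<zeta> X * \<zeta> Y * \<beta>"
    if "dist Oc X = R" "dist Oc Y = R" "X \<noteq> Y" "tangent_line Ellipse F1 F2 a X Y" for X Y
  proof (rule chord_defect_mult_chord_defect)
    show "cmod (\<zeta> X) = 1" "cmod (\<zeta> Y) = 1" "\<zeta> X \<noteq> \<zeta> Y"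
      using that(1-3) R by (simp_all add: cmod_\<zeta> \<zeta>_eq_iff)
    have "Im (cnj (\<zeta> Y - \<zeta> X) * (\<zeta> F - \<zeta> X)) = cross2 (Y - X) (F - X) / R\<^sup>2" for F
    proof -
      have "cnj (\<zeta> Y - \<zeta> X) * (\<zeta> F - \<zeta> X)
              = cnj (complex_of_vec2 (Y - X)) * complex_of_vec2 (F - X) / complex_of_real (R\<^sup>2)"
        by (simp add: \<zeta>_diff power2_eq_square)
      thus ?thesis
        by (simp only: Im_divide_of_real Im_cnj_mult_complex_of_vec2)
    qed
    moreover have "(cmod (\<zeta> Y - \<zeta> X))\<^sup>2 = (norm (Y - X))\<^sup>2 / R\<^sup>2"
      using R by (simp add: \<zeta>_diff norm_divide cmod_complex_of_vec2 power_divide)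
    ultimately show "Im (cnj (\<zeta> Y - \<zeta> X) * (\<zeta> F1 - \<zeta> X)) * Im (cnj (\<zeta> Y - \<zeta> X) * (\<zeta> F2 - \<zeta> X))
                       = (cmod (\<zeta> Y - \<zeta> X))\<^sup>2 * \<beta>"
      using ellipse_tangent_focal_cross2[OF ellipse that(4)] by (simp add: \<beta>_def)
  qed
  have focal_identity: "4 * \<beta> = (1 - (cmod (\<zeta> F1))\<^sup>2) * (1 - (cmod (\<zeta> F2))\<^sup>2)"
    by (rule unit_triangle_chord_defect_identity[OF _ _ _ _ _ _
          chord[OF OA OB \<open>A \<noteq> B\<close> AB] chord[OF OB OC \<open>B \<noteq> C\<close> BC] chord[OF OC OA \<open>C \<noteq> A\<close> CA]])
      (use assms R in \<open>simp_all add: cmod_\<zeta> \<zeta>_eq_iff\<close>)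
  have rescale: "(1 - (cmod (\<zeta> F))\<^sup>2) * R\<^sup>2 = R\<^sup>2 - (dist Oc F)\<^sup>2" for F
    using R by (simp add: cmod_\<zeta> power_divide algebra_simps)
  have "4 * (\<beta> * R\<^sup>2) = 4 * a\<^sup>2 - (dist F1 F2)\<^sup>2"
    using R by (simp add: \<beta>_def)
  hence "(4 * a\<^sup>2 - (dist F1 F2)\<^sup>2) * R\<^sup>2 = 4 * \<beta> * R\<^sup>2 * R\<^sup>2"
    by (simp add: mult_ac)
  also have "\<dots> = ((1 - (cmod (\<zeta> F1))\<^sup>2) * R\<^sup>2) * ((1 - (cmod (\<zeta> F2))\<^sup>2) * R\<^sup>2)"
    unfolding focal_identity by (simp only: mult_ac)
  also have "\<dots> = (R\<^sup>2 - (dist Oc F1)\<^sup>2) * (R\<^sup>2 - (dist Oc F2)\<^sup>2)"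
    by (simp only: rescale)
  finally show ?thesis .
qed

theorem proposition2p5:
  fixes A B C Oc F1 F2 :: "real^2" and R a :: real and k :: conic_kind
  assumes "\<not> collinear {A, B, C}"
    and "dist Oc A = R" and "dist Oc B = R" and "dist Oc C = R"
    and "valid_conic k F1 F2 a"
    and "tangent_line k F1 F2 a A B"
    and "tangent_line k F1 F2 a B C"
    and "tangent_line k F1 F2 a C A"
    and "R ^ 2 = dist Oc F1 * dist Oc F2"
  shows "k = Hyperbola"
proof (rule ccontr)
  assume "k \<noteq> Hyperbola"
  hence k: "k = Ellipse"
    by (cases k) auto
  have ellipse: "dist F1 F2 < 2 * a"
    using assms(5) k by (simp add: valid_conic_def)
  have distinct: "A \<noteq> B" "B \<noteq> C" "C \<noteq> A"
    using assms(1) by (auto simp: collinear_2 insert_commute)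
  hence "R \<noteq> 0"
    using assms(2,3) by auto
  have "(4 * a\<^sup>2 - (dist F1 F2)\<^sup>2) * R\<^sup>2 = (R\<^sup>2 - (dist Oc F1)\<^sup>2) * (R\<^sup>2 - (dist Oc F2)\<^sup>2)"
    using inscribed_ellipse_circumcircle_identity[OF distinct assms(2-4) ellipse] assms(6-8) k
    by simp
  also have "\<dots> = - (R\<^sup>2 * (dist Oc F1 - dist Oc F2)\<^sup>2)"
    using assms(9) by algebra
  also have "\<dots> \<le> 0"
    by simp
  finally have "4 * a\<^sup>2 \<le> (dist F1 F2)\<^sup>2"
    using \<open>R \<noteq> 0\<close> by (simp add: mult_le_0_iff)
  moreover have "(dist F1 F2)\<^sup>2 < (2 * a)\<^sup>2"
    using ellipse by (intro power_strict_mono) auto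
  ultimately show False
    by (simp add: power_mult_distrib)
qed

end
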